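(* Let $g(z)=z^3-z^2+7z+1$, $A=\{z\in\mathbb{C}:\Re z\le0,\ |g(z)|=1\}$ and $B=\{z\in\mathbb{C}:\Re z>0,\ |g(z)|=1\}$. Then $\Re(A)\subset[-0.275,0]$ and $\Re(B)\subset[0.495,0.64]$. Moreover, $z=0$ is the only element $z\in A$ with $\Re(z)=0$. *)

theory Defs
  imports Complex_Main
begin

definition g :: "complex \<Rightarrow> complex" where
  "g z = z^3 - z^2 + 7*z + 1"

definition A :: "complex set" where
  "A = {z. Re z \<le> 0 \<and> cmod (g z) = 1}"

definition B :: "complex set" where
  "B = {z. Re z > 0 \<and> cmod (g z) = 1}"

end

theory Submission imports Defs begin

(*
  For z = x + iy and t = y^2 we have Re g(z) = g(x) + (1 - 3x) t and Im g(z) = y (g'(x) - t),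
  so |g(z)| = 1 is a real polynomial equation in x and t \<ge> 0; it forces |Re g(z)| \<le> 1.
  On (0, 1/3] this is impossible since there g(x) > 1 and 1 - 3x \<ge> 0.  Left of -0.275 we have
  g(x) < -1, and on (1/3, 0.495) the value g(x) + (1 - 3x) g'(x) exceeds 1; in both cases
  Re g(z) \<in> [-1, 1] forces |g'(x) - t| to be so large that Im g(z)^2 > 1 - Re g(z)^2.
  Right of 0.64, eliminating t in favour of w = 1 + Re g(z) \<in> [0, 2] turns the equation into
  a cubic in w whose coefficients are monotone in x; on a few subintervals its positivity on
  [0, 2] is certified by writing it as (w - w0)^2 (\<alpha> - w) + \<beta> + \<gamma> w with \<alpha> \<ge> 2, \<beta> > 0, \<beta> + 2\<gamma> > 0.
*)

definition g_norm_sq :: "real \<Rightarrow> real \<Rightarrow> real" where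
  "g_norm_sq x t = (x^3 - x^2 + 7*x + 1 + (1 - 3*x)*t)^2 + t*(3*x^2 - 2*x + 7 - t)^2"

lemma norm_g_squared: "(cmod (g z))^2 = g_norm_sq (Re z) ((Im z)^2)"
proof -
  have "Re (g z) = Re z^3 - Re z^2 + 7*Re z + 1 + (1 - 3*Re z)*(Im z)^2"
    and "Im (g z) = Im z*(3*(Re z)^2 - 2*Re z + 7 - (Im z)^2)"
    unfolding g_def by (simp_all add: power2_eq_square power3_eq_cube algebra_simps)
  then show ?thesis
    by (simp add: cmod_power2 g_norm_sq_def power_mult_distrib)
qed

lemma g_norm_sq_eq_1_Re_bounded:
  assumes "0 \<le> t" and "g_norm_sq x t = 1"
  shows "\<bar>x^3 - x^2 + 7*x + 1 + (1 - 3*x)*t\<bar> \<le> 1"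
proof -
  have "0 \<le> t*(3*x^2 - 2*x + 7 - t)^2" using assms(1) by simp
  then have "(x^3 - x^2 + 7*x + 1 + (1 - 3*x)*t)^2 \<le> 1"
    using assms(2) unfolding g_norm_sq_def by linarith
  then show ?thesis by (simp add: abs_square_le_1)
qed

lemma cubic_minus_square_mono:
  fixes x y k :: real
  assumes "0 \<le> x" "x \<le> y" "1 \<le> k"
  shows "x^3 - x^2 + k*x \<le> y^3 - y^2 + k*y"
proof -
  have factor: "y^3 - y^2 + k*y - (x^3 - x^2 + k*x)
      = (y - x)*((x - 1/2)^2 + (y - 1/2)^2 + x*y + k - 1/2)"
    by (simp add: algebra_simps power2_eq_square power3_eq_cube)
  have "0 \<le> (x - 1/2)^2 + (y - 1/2)^2 + x*y + k - 1/2"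
    using assms zero_le_power2[of "x - 1/2"] zero_le_power2[of "y - 1/2"] mult_nonneg_nonneg[of x y]
    by linarith
  then have "0 \<le> (y - x)*((x - 1/2)^2 + (y - 1/2)^2 + x*y + k - 1/2)"
    using assms(2) by simp
  then show ?thesis unfolding factor[symmetric] by simp
qed

lemma g_norm_sq_zero_eq_1:
  assumes "0 \<le> t" and "g_norm_sq 0 t = 1"
  shows "t = 0"
proof -
  have "2*t + t^2 + t*(7 - t)^2 = 0"
    using assms(2) by (simp add: g_norm_sq_def power2_eq_square algebra_simps)
  moreover have "0 \<le> t^2" "0 \<le> t*(7 - t)^2" using assms(1) by simp_all
  ultimately show ?thesis using assms(1) by linarith
qed

lemma g_norm_sq_ne_1_far_left:
  assumes t: "0 \<le> t" and x: "x < -11/40"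
  shows "g_norm_sq x t \<noteq> 1"
proof
  assume E: "g_norm_sq x t = 1"
  define q where "q = 1 - 3*x"
  define c where "c = 3*x^2 - 2*x + 7"
  define h where "h = -8*x^3 + 8*x^2 - 16*x + 8" \<comment> \<open>h = g(x) + (1 - 3x) g'(x)\<close>
  define v where "v = x^3 - x^2 + 7*x + 1 + q*t"
  have norm_eq: "v^2 + t*(c - t)^2 = 1" using E unfolding g_norm_sq_def v_def q_def c_def .
  have "\<bar>v\<bar> \<le> 1" using g_norm_sq_eq_1_Re_bounded[OF t E] unfolding v_def q_def .
  then have v_le: "v \<le> 1" and v_ge: "-1 \<le> v" by auto
  have v_eq: "v = h - q*(c - t)"
    unfolding v_def h_def q_def c_def by (simp add: algebra_simps power2_eq_square power3_eq_cube)
  have xx: "121/1600 < x*x" using mult_strict_mono[of "11/40" "-x" "11/40" "-x"] x by simp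
  have x3: "x^3 < 0" using x xx by (simp add: power3_eq_cube mult_pos_neg)
  have x2: "x^2 = x*x" by (simp add: power2_eq_square)
  have q_pos: "0 < q" using x unfolding q_def by simp
  have g_lt: "x^3 - x^2 + 7*x + 1 < -1" using x xx x3 x2 by linarith
  have h_ge: "7 \<le> h - 1" using x x3 xx x2 unfolding h_def by linarith
  have "1 - v^2 < 2*q*t"
  proof -
    have "1 - v^2 = (1 - v)*(1 + v)" by (simp add: algebra_simps power2_eq_square)
    also have "\<dots> \<le> 2*(1 + v)" using v_le v_ge by (intro mult_right_mono) auto
    also have "\<dots> < 2*q*t" using g_lt unfolding v_def by simp
    finally show ?thesis .
  qed
  moreover have "2*q \<le> (c - t)^2"
  proof -
    have "7*(h - 1) - 2*q^3 = -2*x^3 + 2*x^2 - 94*x + 47"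
      unfolding h_def q_def by (simp add: algebra_simps power2_eq_square power3_eq_cube)
    also have "\<dots> \<ge> 0" using x x3 xx x2 by linarith
    finally have "2*q^3 \<le> 7*(h - 1)" by simp
    also have "\<dots> \<le> (h - 1)^2"
      using mult_right_mono[OF h_ge, of "h - 1"] h_ge by (simp add: power2_eq_square)
    also have "\<dots> \<le> (q*(c - t))^2" using v_le v_eq h_ge by (intro power_mono) auto
    finally have "q^2*(2*q) \<le> q^2*(c - t)^2"
      by (simp add: power_mult_distrib power3_eq_cube power2_eq_square algebra_simps)
    then show ?thesis using q_pos by simp
  qed
  then have "2*q*t \<le> t*(c - t)^2" using t by (simp add: mult_left_mono mult.commute)
  ultimately show False using norm_eq by linarith
qed

lemma g_norm_sq_ne_1_pos_le_third:
  assumes t: "0 \<le> t" and x: "0 < x" "x \<le> 1/3"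
  shows "g_norm_sq x t \<noteq> 1"
proof
  assume E: "g_norm_sq x t = 1"
  have "0 < x*((x - 1/2)^2 + 27/4)" using x by (simp add: add_nonneg_pos)
  then have "1 < x^3 - x^2 + 7*x + 1"
    by (simp add: algebra_simps power2_eq_square power3_eq_cube)
  moreover have "0 \<le> (1 - 3*x)*t" using x t by simp
  moreover have "\<bar>x^3 - x^2 + 7*x + 1 + (1 - 3*x)*t\<bar> \<le> 1"
    using g_norm_sq_eq_1_Re_bounded[OF t E] .
  ultimately show False by linarith
qed

lemma g_norm_sq_ne_1_third_to_0495:
  assumes t: "0 \<le> t" and x: "1/3 < x" "x < 99/200"
  shows "g_norm_sq x t \<noteq> 1"
proof
  assume E: "g_norm_sq x t = 1"
  define m where "m = 3*x - 1"
  define c where "c = 3*x^2 - 2*x + 7"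
  define h where "h = -8*x^3 + 8*x^2 - 16*x + 8"
  define s where "s = t - c"
  define v where "v = x^3 - x^2 + 7*x + 1 + (1 - 3*x)*t"
  have norm_eq: "v^2 + t*(c - t)^2 = 1" using E unfolding g_norm_sq_def v_def c_def .
  have "\<bar>v\<bar> \<le> 1" using g_norm_sq_eq_1_Re_bounded[OF t E] unfolding v_def .
  then have v_le: "v \<le> 1" and v_ge: "-1 \<le> v" by auto
  have m_pos: "0 < m" and m_lt: "m < 1/2" using x unfolding m_def by auto
  have v_eq: "v = h - m*s" unfolding v_def h_def m_def s_def c_def
    by (simp add: algebra_simps power2_eq_square power3_eq_cube)
  have c_ge: "20/3 \<le> c"
    using zero_le_power2[of "x - 1/3"] unfolding c_def by (simp add: algebra_simps power2_eq_square)
  have h_ge: "1/20 \<le> h - 1"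
  proof -
    have "x^3 - x^2 + 2*x \<le> (99/200)^3 - (99/200)^2 + 2*(99/200)"
      using cubic_minus_square_mono[of x "99/200" 2] x by simp
    then show ?thesis unfolding h_def by (simp add: power2_eq_square power3_eq_cube)
  qed
  have "h - 1 \<le> m*s" using v_le v_eq by simp
  then have s_pos: "0 < s" using h_ge m_pos zero_less_mult_pos[of m s] by linarith
  have "1 - v^2 = (1 - v)*(1 + v)" by (simp add: algebra_simps power2_eq_square)
  also have "\<dots> \<le> (1 - v)*2" using v_le v_ge by (intro mult_left_mono) auto
  finally have "1 - v^2 \<le> 2*(m*s - (h - 1))" using v_eq by simp
  moreover have "t*(c - t)^2 = c*s^2 + s^3"
    unfolding s_def by (simp add: power2_eq_square power3_eq_cube algebra_simps)
  moreover have "0 < s^3" using s_pos by simp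
  ultimately have "c*s^2 \<le> 2*(m*s - (h - 1))" using norm_eq by linarith
  then have "c*(c*s^2) \<le> c*(2*(m*s - (h - 1)))" using c_ge by (intro mult_left_mono) auto
  then have "(c*s - m)^2 \<le> m^2 - 2*c*(h - 1)" by (simp add: power2_eq_square algebra_simps)
  moreover have "m^2 < 2*c*(h - 1)"
  proof -
    have "m^2 < 1/4" using m_pos m_lt mult_strict_mono[of m "1/2" m "1/2"] by (simp add: power2_eq_square)
    moreover have "2*(20/3)*(1/20) \<le> 2*c*(h - 1)" using c_ge h_ge by (intro mult_mono) auto
    ultimately show ?thesis by linarith
  qed
  ultimately show False using zero_le_power2[of "c*s - m"] by linarith
qed

lemma cubic_form_mono:
  fixes a0 a b0 b M M1 w :: real
  assumes "0 \<le> a0" "a0 \<le> a" "2 \<le> b0" "b0 \<le> b" "M \<le> M1" "0 \<le> w" "w \<le> 2"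
  shows "(b0 - w)*(a0 + w)^2 - M1*w*(2 - w) \<le> (b - w)*(a + w)^2 - M*w*(2 - w)"
proof -
  have "(a0 + w)^2 \<le> (a + w)^2" using assms by (intro power_mono) auto
  then have "(b0 - w)*(a0 + w)^2 \<le> (b - w)*(a + w)^2" using assms by (intro mult_mono) auto
  moreover have "M*(w*(2 - w)) \<le> M1*(w*(2 - w))" using assms by (intro mult_right_mono) auto
  ultimately show ?thesis by (simp add: mult.assoc)
qed

lemma cubic_form_pos_certificate:
  fixes a b M w ws :: real
  defines "\<alpha> \<equiv> b - 2*a + M - 2*ws"
  assumes "0 \<le> w" "w \<le> 2" and "2 \<le> \<alpha>" and "0 < a^2*b - \<alpha>*ws^2"
    and "0 < a^2*b - \<alpha>*ws^2 + 2*(2*a*b - a^2 - 2*M + 2*\<alpha>*ws + ws^2)"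
  shows "0 < (b - w)*(a + w)^2 - M*w*(2 - w)"
proof -
  define \<beta> where "\<beta> = a^2*b - \<alpha>*ws^2"
  define \<gamma> where "\<gamma> = 2*a*b - a^2 - 2*M + 2*\<alpha>*ws + ws^2"
  have "(b - w)*(a + w)^2 - M*w*(2 - w) = (w - ws)^2*(\<alpha> - w) + ((1 - w/2)*\<beta> + (w/2)*(\<beta> + 2*\<gamma>))"
    unfolding \<alpha>_def \<beta>_def \<gamma>_def by (simp add: algebra_simps power2_eq_square)
  moreover have "0 \<le> (w - ws)^2*(\<alpha> - w)" using assms by simp
  moreover have "0 < (1 - w/2)*\<beta> + (w/2)*(\<beta> + 2*\<gamma>)"
  proof (cases "w = 2")
    case False
    then have "0 < (1 - w/2)*\<beta>" using assms unfolding \<beta>_def by simp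
    moreover have "0 \<le> (w/2)*(\<beta> + 2*\<gamma>)" using assms unfolding \<beta>_def \<gamma>_def by simp
    ultimately show ?thesis by linarith
  qed (use assms in \<open>simp add: \<beta>_def \<gamma>_def\<close>)
  ultimately show ?thesis by linarith
qed

lemma cubic_form_pos_if_small_M:
  fixes a b M w :: real
  assumes "0 < a" "2 \<le> b" "0 \<le> M" "M < 2*a*(b - 2)" "0 \<le> w" "w \<le> 2"
  shows "0 < (b - w)*(a + w)^2 - M*w*(2 - w)"
proof (cases "w = 0")
  case True
  then show ?thesis using assms by simp
next
  case False
  then have w_pos: "0 < w" using assms by simp
  have "4*a*w \<le> (a + w)^2"
    using zero_le_power2[of "a - w"] by (simp add: power2_eq_square algebra_simps)
  then have "(b - 2)*(4*a*w) \<le> (b - w)*(a + w)^2" using assms by (intro mult_mono) auto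
  moreover have "M*w*(2 - w) \<le> M*w*2" using assms w_pos by (simp add: mult_left_mono)
  moreover have "0 < w*(2*a*(b - 2) - M)" using assms w_pos by simp
  ultimately show ?thesis by (simp add: algebra_simps)
qed

definition elim_cubic :: "real \<Rightarrow> real \<Rightarrow> real" where
  "elim_cubic x w = (x^3 - x^2 + 7*x + 2 - w)*(8*x^3 - 8*x^2 + 16*x - 9 + w)^2 - (3*x - 1)^3*w*(2 - w)"

(* Obtained by substituting t = (w - g(x) - 1)/(1 - 3x) into g_norm_sq x t = 1 and
   clearing the denominator (1 - 3x)^3. *)
lemma elim_cubic_g_norm_sq:
  "elim_cubic x (1 + (x^3 - x^2 + 7*x + 1 + (1 - 3*x)*t)) = (3*x - 1)^3*(g_norm_sq x t - 1)"
  unfolding elim_cubic_def g_norm_sq_def by (simp add: algebra_simps power2_eq_square power3_eq_cube)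

lemma elim_cubic_pos_on_interval:
  fixes lo hi ws :: real
  defines "a0 \<equiv> 8*lo^3 - 8*lo^2 + 16*lo - 9" and "b0 \<equiv> lo^3 - lo^2 + 7*lo + 2"
    and "M1 \<equiv> (3*hi - 1)^3"
  defines "\<alpha> \<equiv> b0 - 2*a0 + M1 - 2*ws"
  assumes "0 \<le> lo" "lo \<le> x" "x \<le> hi" "0 \<le> w" "w \<le> 2" "0 \<le> a0"
    and "2 \<le> \<alpha>" and "0 < a0^2*b0 - \<alpha>*ws^2"
    and "0 < a0^2*b0 - \<alpha>*ws^2 + 2*(2*a0*b0 - a0^2 - 2*M1 + 2*\<alpha>*ws + ws^2)"
  shows "0 < elim_cubic x w"
proof -
  have "0 < (b0 - w)*(a0 + w)^2 - M1*w*(2 - w)"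
    using assms(5-) unfolding \<alpha>_def by (intro cubic_form_pos_certificate)
  also have "\<dots> \<le> elim_cubic x w"
    unfolding elim_cubic_def
  proof (rule cubic_form_mono)
    show "a0 \<le> 8*x^3 - 8*x^2 + 16*x - 9"
      using cubic_minus_square_mono[of lo x 2] assms(5,6) unfolding a0_def by simp
    show "b0 \<le> x^3 - x^2 + 7*x + 2"
      using cubic_minus_square_mono[of lo x 7] assms(5,6) unfolding b0_def by simp
    show "2 \<le> b0"
      using cubic_minus_square_mono[of 0 lo 7] assms(5) unfolding b0_def by simp
    show "(3*x - 1)^3 \<le> M1"
      unfolding M1_def using assms(7) by (simp add: power_mono_odd)
  qed (use assms(8-10) in auto)
  finally show ?thesis .
qed

lemma elim_cubic_pos_beyond:
  assumes x: "17/25 \<le> x" and "0 \<le> w" "w \<le> 2"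
  shows "0 < elim_cubic x w"
proof -
  define a where "a = 8*x^3 - 8*x^2 + 16*x - 9"
  define b where "b = x^3 - x^2 + 7*x + 2"
  define M where "M = (3*x - 1)^3"
  have mono: "(17/25)^3 - (17/25)^2 + k*(17/25) \<le> x^3 - x^2 + k*x" if "1 \<le> k" for k
    using cubic_minus_square_mono[of "17/25" x k] x that by simp
  have a_ge: "8*(1212032/1000000) - 9 \<le> a"
    using mono[of 2] unfolding a_def by (simp add: power2_eq_square power3_eq_cube)
  have b_ge: "4612032/1000000 \<le> b - 2"
    using mono[of 7] unfolding b_def by (simp add: power2_eq_square power3_eq_cube)
  define K where "K = x^3 - x^2 + 3*x"
  have "9*a - M = 45*K - 80"
    unfolding a_def M_def K_def by (simp add: algebra_simps power2_eq_square power3_eq_cube)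
  moreover have "1892032/1000000 \<le> K"
    using mono[of 3] unfolding K_def by (simp add: power2_eq_square power3_eq_cube)
  ultimately have "M < 9*a" by linarith
  also have "9*a \<le> 2*a*(b - 2)" using a_ge b_ge by (simp add: mult_left_mono)
  finally have "M < 2*a*(b - 2)" .
  moreover have "0 \<le> M" unfolding M_def using x by simp
  ultimately have "0 < (b - w)*(a + w)^2 - M*w*(2 - w)"
    using a_ge b_ge assms by (intro cubic_form_pos_if_small_M) auto
  then show ?thesis unfolding elim_cubic_def a_def b_def M_def .
qed

lemma elim_cubic_pos:
  assumes x: "16/25 < x" and w: "0 \<le> w" "w \<le> 2"
  shows "0 < elim_cubic x w"
proof -
  \<comment> \<open>The subdivision is this fine because the bound is nearly sharp: sup Re B is about 0.63999.\<close>
  consider "x \<le> 6402/10000" | "6402/10000 \<le> x" "x \<le> 642/1000"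
    | "642/1000 \<le> x" "x \<le> 17/25" | "17/25 \<le> x"
    by linarith
  then show ?thesis
  proof cases
    case 1
    then show ?thesis using x w
      by (intro elim_cubic_pos_on_interval[where lo = "16/25" and hi = "6402/10000" and ws = "28953/500000"])
        (simp_all add: power2_eq_square power3_eq_cube)
  next
    case 2
    then show ?thesis using w
      by (intro elim_cubic_pos_on_interval[where lo = "6402/10000" and hi = "642/1000" and ws = "569759/10000000"])
        (simp_all add: power2_eq_square power3_eq_cube)
  next
    case 3
    then show ?thesis using w
      by (intro elim_cubic_pos_on_interval[where lo = "642/1000" and hi = "17/25" and ws = "763857/10000000"])
        (simp_all add: power2_eq_square power3_eq_cube)
  next
    case 4
    then show ?thesis using w by (rule elim_cubic_pos_beyond)
  qed
qed

lemma g_norm_sq_ne_1_far_right: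
  assumes t: "0 \<le> t" and x: "16/25 < x"
  shows "g_norm_sq x t \<noteq> 1"
proof
  assume E: "g_norm_sq x t = 1"
  define v where "v = x^3 - x^2 + 7*x + 1 + (1 - 3*x)*t"
  have "\<bar>v\<bar> \<le> 1" using g_norm_sq_eq_1_Re_bounded[OF t E] unfolding v_def .
  then have "0 < elim_cubic x (1 + v)" using x by (intro elim_cubic_pos) auto
  moreover have "elim_cubic x (1 + v) = 0" using elim_cubic_g_norm_sq[of x t] E unfolding v_def by simp
  ultimately show False by simp
qed

theorem lemma3p6:
  shows "Re ` A \<subseteq> {-0.275..0} \<and> Re ` B \<subseteq> {0.495..0.64} \<and>
         {z \<in> A. Re z = 0} = {0}"
proof -
  have norm_eq: "g_norm_sq (Re z) ((Im z)^2) = 1" if "cmod (g z) = 1" for z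
    using norm_g_squared[of z] that by simp
  have "-11/40 \<le> Re z" if "z \<in> A" for z
    using that g_norm_sq_ne_1_far_left[OF zero_le_power2, of "Re z" "Im z"] norm_eq
    unfolding A_def by force
  then have "Re ` A \<subseteq> {-0.275..0}" by (auto simp: A_def)
  moreover have "99/200 \<le> Re z \<and> Re z \<le> 16/25" if "z \<in> B" for z
    using that norm_eq g_norm_sq_ne_1_pos_le_third[OF zero_le_power2, of "Re z" "Im z"]
      g_norm_sq_ne_1_third_to_0495[OF zero_le_power2, of "Re z" "Im z"]
      g_norm_sq_ne_1_far_right[OF zero_le_power2, of "Re z" "Im z"]
    unfolding B_def by force
  then have "Re ` B \<subseteq> {0.495..0.64}" by auto
  moreover have "z = 0" if "z \<in> A" "Re z = 0" for z
  proof -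
    have "g_norm_sq 0 ((Im z)^2) = 1" using that norm_eq[of z] unfolding A_def by simp
    then have "(Im z)^2 = 0" by (rule g_norm_sq_zero_eq_1[OF zero_le_power2])
    then show ?thesis using that(2) by (simp add: complex_eq_iff)
  qed
  then have "{z \<in> A. Re z = 0} = {0}" by (auto simp: A_def g_def)
  ultimately show ?thesis by blast
qed

end
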